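(* Let $k\in\mathbb{N}$ and let $A$ be a Borel subset of $\mathbb{R}^k$. Then \[\gamma_k(A-A)\ge\gamma_k(A)^4,\] where $A-A=\{a-a':a,a'\in A\}$.
   Context: $\gamma_k$ denotes the Gaussian measure on $\mathbb{R}^k$ with $\gamma_k(S)=\mathbb{P}(g\in S)$, $g\sim\mathcal{N}(0,(2\pi)^{-1}I_k)$. *)

theory Defs
  imports "HOL-Analysis.Analysis"
begin

text \<open>We use the
  completed Lebesgue measure so that the difference set A - A of a Borel set
  (an analytic, hence Lebesgue measurable, set) is measurable.\<close>
definition gaussian_measure :: "'a::euclidean_space measure" where
  "gaussian_measure = density lebesgue (\<lambda>x. ennreal (exp (- pi * norm x ^ 2)))"

end

theory Submission
  imports Defs "HOL-Probability.Distributions"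
begin

text \<open>
  Let \<open>\<gamma>\<close> be the Gaussian measure and \<open>h x = \<gamma>{y. (x + y) / \<surd>2 \<in> A}\<close>. Since \<open>(x + y) / \<surd>2\<close>
  and \<open>(y - z) / \<surd>2\<close> are again \<open>\<gamma>\<close>-distributed when \<open>x, y, z\<close> are independent with law \<open>\<gamma>\<close>,
  we get \<open>\<integral> h d\<gamma> = \<gamma>(A)\<close>, and \<open>h(x)\<^sup>2 \<le> \<gamma>(A - A)\<close> because two points \<open>(x + y) / \<surd>2\<close> and
  \<open>(x + z) / \<surd>2\<close> of \<open>A\<close> differ by \<open>(y - z) / \<surd>2\<close>. Jensen's inequality then gives
  \<open>\<gamma>(A)\<^sup>2 \<le> \<gamma>(A - A)\<close>, which is stronger than the claim as \<open>\<gamma>(A) \<le> 1\<close>.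

  The difference set of a Borel set need not be Borel, but it is analytic, and analytic sets are
  Lebesgue measurable: a bounded analytic set contains closed sets of almost full outer measure,
  obtained by bounding the parameters of a continuous parametrisation one coordinate at a time
  and passing to the limit by compactness.
\<close>

section \<open>Gaussian integrals\<close>

definition gaussian_density :: "'a::euclidean_space \<Rightarrow> ennreal" where
  "gaussian_density x = ennreal (exp (- pi * norm x ^ 2))"

lemma borel_measurable_gaussian_density[measurable]: "gaussian_density \<in> borel_measurable borel"
  unfolding gaussian_density_def by measurable

lemma gaussian_density_minus[simp]: "gaussian_density (- x) = gaussian_density x"
  unfolding gaussian_density_def by simp

lemma nn_integral_lborel_affine:
  fixes f :: "'a::euclidean_space \<Rightarrow> ennreal"
  assumes [measurable]: "f \<in> borel_measurable borel" and c: "c \<noteq> 0"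
  shows "(\<integral>\<^sup>+x. f x \<partial>lborel) = ennreal (\<bar>c\<bar> ^ DIM('a)) * (\<integral>\<^sup>+x. f (t + c *\<^sub>R x) \<partial>lborel)"
  by (subst lborel_affine[OF c, of t])
    (simp add: nn_integral_density nn_integral_distr nn_integral_cmult)

lemma nn_integral_exp_minus_pi_square: "(\<integral>\<^sup>+x. ennreal (exp (- pi * x ^ 2)) \<partial>lborel) = 1"
proof -
  define \<sigma> :: real where "\<sigma> = 1 / sqrt (2 * pi)"
  have "\<sigma> > 0" unfolding \<sigma>_def by simp
  have "normal_density 0 \<sigma> x = exp (- pi * x ^ 2)" for x
    unfolding normal_density_def \<sigma>_def by (simp add: power_divide real_sqrt_mult power_mult_distrib)
  then have "(\<integral>\<^sup>+x. ennreal (exp (- pi * x ^ 2)) \<partial>lborel)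
      = (\<integral>\<^sup>+x. ennreal (normal_density 0 \<sigma> x) \<partial>lborel)"
    by simp
  also have "\<dots> = 1"
    using prob_space.emeasure_space_1[OF prob_space_normal_density[OF \<open>\<sigma> > 0\<close>]]
    by (simp add: emeasure_density)
  finally show ?thesis .
qed

lemma gaussian_density_eq_prod:
  "gaussian_density x = (\<Prod>b\<in>Basis. ennreal (exp (- pi * (x \<bullet> b) ^ 2)))"
proof -
  have "norm x ^ 2 = (\<Sum>b\<in>Basis. (x \<bullet> b) ^ 2)"
    unfolding power2_norm_eq_inner by (subst euclidean_inner) (simp add: power2_eq_square)
  then have "exp (- pi * norm x ^ 2) = (\<Prod>b\<in>Basis. exp (- pi * (x \<bullet> b) ^ 2))"
    by (simp add: sum_distrib_left exp_sum)
  then show ?thesis unfolding gaussian_density_def by (simp add: prod_ennreal)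
qed

lemma nn_integral_gaussian_density:
  "(\<integral>\<^sup>+x. gaussian_density x \<partial>(lborel :: 'a::euclidean_space measure)) = 1"
  unfolding gaussian_density_eq_prod
  by (subst nn_integral_lborel_prod) (use nn_integral_exp_minus_pi_square in auto)

lemma nn_integral_gaussian_density_affine:
  assumes "c \<noteq> 0"
  shows "(\<integral>\<^sup>+x. gaussian_density (t + c *\<^sub>R x) \<partial>(lborel :: 'a::euclidean_space measure))
    = ennreal (1 / \<bar>c\<bar> ^ DIM('a))"
proof -
  have "ennreal (1 / \<bar>c\<bar> ^ DIM('a)) = ennreal (1 / \<bar>c\<bar> ^ DIM('a)) * ennreal (\<bar>c\<bar> ^ DIM('a)) *
      (\<integral>\<^sup>+x. gaussian_density (t + c *\<^sub>R x) \<partial>(lborel :: 'a measure))"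
    using nn_integral_lborel_affine[OF borel_measurable_gaussian_density assms, of t]
    by (simp add: nn_integral_gaussian_density mult.assoc)
  also have "ennreal (1 / \<bar>c\<bar> ^ DIM('a)) * ennreal (\<bar>c\<bar> ^ DIM('a)) = 1"
    using assms by (simp add: ennreal_mult'[symmetric])
  finally show ?thesis by simp
qed

text \<open>Completing the square: \<open>|x|\<^sup>2 + |\<surd>2 u - x|\<^sup>2 = |u|\<^sup>2 + |\<surd>2 x - u|\<^sup>2\<close>.\<close>
lemma gaussian_density_mult:
  "gaussian_density x * gaussian_density (sqrt 2 *\<^sub>R u - x)
    = gaussian_density u * gaussian_density (- u + sqrt 2 *\<^sub>R x)"
proof -
  have "norm x ^ 2 + norm (sqrt 2 *\<^sub>R u - x) ^ 2 = norm u ^ 2 + norm (- u + sqrt 2 *\<^sub>R x) ^ 2"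
    unfolding power2_norm_eq_inner by (simp add: inner_simps inner_commute algebra_simps)
  from arg_cong[OF this, of "\<lambda>z. - pi * z"]
  have "exp (- pi * norm x ^ 2) * exp (- pi * norm (sqrt 2 *\<^sub>R u - x) ^ 2)
      = exp (- pi * norm u ^ 2) * exp (- pi * norm (- u + sqrt 2 *\<^sub>R x) ^ 2)"
    by (simp add: exp_add[symmetric] algebra_simps)
  then show ?thesis
    unfolding gaussian_density_def by (simp only: ennreal_mult[symmetric] exp_ge_zero)
qed

lemma nn_integral_gaussian_density_convolution:
  "(\<integral>\<^sup>+x. gaussian_density x * gaussian_density (sqrt 2 *\<^sub>R u - x) \<partial>lborel)
    = gaussian_density (u :: 'a::euclidean_space) * ennreal (1 / sqrt 2 ^ DIM('a))"
proof -
  have "(\<integral>\<^sup>+x. gaussian_density x * gaussian_density (sqrt 2 *\<^sub>R u - x) \<partial>lborel)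
      = (\<integral>\<^sup>+x. gaussian_density u * gaussian_density (- u + sqrt 2 *\<^sub>R x) \<partial>lborel)"
    by (simp only: gaussian_density_mult)
  also have "\<dots> = gaussian_density u * (\<integral>\<^sup>+x. gaussian_density (- u + sqrt 2 *\<^sub>R x) \<partial>lborel)"
    by (rule nn_integral_cmult) measurable
  also have "\<dots> = gaussian_density u * ennreal (1 / sqrt 2 ^ DIM('a))"
    by (subst nn_integral_gaussian_density_affine) auto
  finally show ?thesis .
qed

definition gaussian_borel :: "'a::euclidean_space measure" where
  "gaussian_borel = density lborel gaussian_density"

lemma sets_gaussian_borel[simp, measurable_cong]: "sets gaussian_borel = sets borel"
  unfolding gaussian_borel_def by simp

lemma nn_integral_gaussian_borel:
  "f \<in> borel_measurable borel \<Longrightarrow>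
    (\<integral>\<^sup>+x. f x \<partial>gaussian_borel) = (\<integral>\<^sup>+x. gaussian_density x * f x \<partial>lborel)"
  unfolding gaussian_borel_def by (simp add: nn_integral_density)

lemma prob_space_gaussian_borel: "prob_space gaussian_borel"
  by (rule prob_spaceI) (simp add: gaussian_borel_def emeasure_density nn_integral_gaussian_density)

lemma gaussian_measure_eq_completion: "gaussian_measure = completion gaussian_borel"
  unfolding gaussian_measure_def gaussian_borel_def gaussian_density_def[abs_def]
  by (rule completion_density_eq[symmetric]) auto

lemma prob_space_gaussian_measure: "prob_space gaussian_measure"
  unfolding gaussian_measure_eq_completion
  by (rule prob_space.prob_space_completion[OF prob_space_gaussian_borel])

lemma nn_integral_gaussian_borel_uminus:
  assumes [measurable]: "f \<in> borel_measurable borel"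
  shows "(\<integral>\<^sup>+x. f (- x) \<partial>gaussian_borel) = (\<integral>\<^sup>+x. f x \<partial>gaussian_borel)"
  using nn_integral_lborel_affine[of "\<lambda>x. gaussian_density x * f x" "-1" 0]
  by (simp add: nn_integral_gaussian_borel)

lemma nn_integral_gaussian_borel_rotation:
  fixes f :: "'a::euclidean_space \<Rightarrow> ennreal"
  assumes [measurable]: "f \<in> borel_measurable borel"
  shows "(\<integral>\<^sup>+x. \<integral>\<^sup>+y. f ((1 / sqrt 2) *\<^sub>R (x + y)) \<partial>gaussian_borel \<partial>gaussian_borel)
    = (\<integral>\<^sup>+u. f u \<partial>gaussian_borel)"
proof -
  define s :: real where "s = sqrt 2"
  have s: "s > 0" by (simp add: s_def)
  have substitute: "(\<integral>\<^sup>+y. gaussian_density y * f ((1 / s) *\<^sub>R (x + y)) \<partial>lborel)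
      = ennreal (s ^ DIM('a)) * (\<integral>\<^sup>+u. gaussian_density (s *\<^sub>R u - x) * f u \<partial>lborel)" for x
    using nn_integral_lborel_affine[of "\<lambda>y. gaussian_density y * f ((1 / s) *\<^sub>R (x + y))" s "- x"] s
    by simp
  have "(\<integral>\<^sup>+x. \<integral>\<^sup>+y. f ((1 / s) *\<^sub>R (x + y)) \<partial>gaussian_borel \<partial>gaussian_borel)
      = (\<integral>\<^sup>+x. gaussian_density x
          * (ennreal (s ^ DIM('a)) * (\<integral>\<^sup>+u. gaussian_density (s *\<^sub>R u - x) * f u \<partial>lborel)) \<partial>lborel)"
    by (simp add: nn_integral_gaussian_borel substitute)
  also have "\<dots> = ennreal (s ^ DIM('a))
      * (\<integral>\<^sup>+x. \<integral>\<^sup>+u. gaussian_density x * gaussian_density (s *\<^sub>R u - x) * f u \<partial>lborel \<partial>lborel)"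
    by (subst nn_integral_cmult[symmetric], measurable)
       (simp add: nn_integral_cmult[symmetric] mult.assoc mult.left_commute)
  also have "(\<integral>\<^sup>+x. \<integral>\<^sup>+u. gaussian_density x * gaussian_density (s *\<^sub>R u - x) * f u \<partial>lborel \<partial>lborel)
      = (\<integral>\<^sup>+u. (\<integral>\<^sup>+x. gaussian_density x * gaussian_density (s *\<^sub>R u - x) \<partial>lborel) * f u \<partial>lborel)"
    by (subst lborel_pair.Fubini') (simp_all add: nn_integral_multc)
  also have "\<dots> = (\<integral>\<^sup>+u. ennreal (1 / s ^ DIM('a)) * (gaussian_density u * f u) \<partial>lborel)"
    by (simp add: s_def nn_integral_gaussian_density_convolution ac_simps)
  also have "\<dots> = ennreal (1 / s ^ DIM('a)) * (\<integral>\<^sup>+u. gaussian_density u * f u \<partial>lborel)"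
    by (rule nn_integral_cmult) measurable
  also have "ennreal (s ^ DIM('a))
      * (ennreal (1 / s ^ DIM('a)) * (\<integral>\<^sup>+u. gaussian_density u * f u \<partial>lborel))
      = (\<integral>\<^sup>+u. gaussian_density u * f u \<partial>lborel)"
    using s by (simp add: mult.assoc[symmetric] ennreal_mult'[symmetric])
  finally show ?thesis
    by (simp add: s_def nn_integral_gaussian_borel)
qed

lemma ennreal_two_mult_le_sum_squares:
  fixes a b :: ennreal
  shows "2 * a * b \<le> a ^ 2 + b ^ 2"
proof (cases a; cases b)
  fix r q assume "a = ennreal r" "0 \<le> r" "b = ennreal q" "0 \<le> q"
  moreover have "ennreal (2 * r * q) \<le> ennreal (r ^ 2 + q ^ 2)"
    by (rule ennreal_leI) (rule sum_squares_bound)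
  ultimately show ?thesis
    by (simp add: ennreal_mult ennreal_power ennreal_plus)
qed (auto simp: top_add)

lemma (in prob_space) nn_integral_square_le:
  assumes [measurable]: "h \<in> borel_measurable M"
  shows "(\<integral>\<^sup>+x. h x \<partial>M) ^ 2 \<le> (\<integral>\<^sup>+x. h x ^ 2 \<partial>M)"
proof (cases "(\<integral>\<^sup>+x. h x \<partial>M) = \<infinity>")
  case True
  have "(\<integral>\<^sup>+x. h x \<partial>M) \<le> (\<integral>\<^sup>+x. h x ^ 2 + 1 \<partial>M)"
  proof (rule nn_integral_mono)
    fix x
    have "h x \<le> 2 * h x * 1" by (simp add: mult_2 add_increasing2)
    also have "\<dots> \<le> h x ^ 2 + 1" using ennreal_two_mult_le_sum_squares[of "h x" 1] by simp
    finally show "h x \<le> h x ^ 2 + 1" .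
  qed
  also have "\<dots> = (\<integral>\<^sup>+x. h x ^ 2 \<partial>M) + 1"
    by (simp add: nn_integral_add emeasure_space_1)
  finally show ?thesis using True by (simp add: top_unique)
next
  case False
  define g where "g = (\<integral>\<^sup>+x. h x \<partial>M)"
  have "g ^ 2 + g ^ 2 = 2 * g * g"
    by (simp add: power2_eq_square mult_2 distrib_right)
  also have "\<dots> = (\<integral>\<^sup>+x. 2 * g * h x \<partial>M)"
    unfolding g_def by (rule nn_integral_cmult[symmetric]) measurable
  also have "\<dots> \<le> (\<integral>\<^sup>+x. h x ^ 2 + g ^ 2 \<partial>M)"
    by (intro nn_integral_mono)
      (metis ennreal_two_mult_le_sum_squares add.commute mult.assoc mult.commute)
  also have "\<dots> = (\<integral>\<^sup>+x. h x ^ 2 \<partial>M) + g ^ 2"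
    by (simp add: nn_integral_add emeasure_space_1)
  finally show ?thesis
    using False
    by (simp add: g_def add.commute[of _ "g ^ 2"] ennreal_add_left_cancel_le power_eq_top_ennreal)
qed

lemma nn_integral_gaussian_borel_rotation_diff:
  fixes f :: "'a::euclidean_space \<Rightarrow> ennreal"
  assumes [measurable]: "f \<in> borel_measurable borel"
  shows "(\<integral>\<^sup>+y. \<integral>\<^sup>+z. f ((1 / sqrt 2) *\<^sub>R (y - z)) \<partial>gaussian_borel \<partial>gaussian_borel)
    = (\<integral>\<^sup>+u. f u \<partial>gaussian_borel)"
proof -
  have "(\<integral>\<^sup>+z. f ((1 / sqrt 2) *\<^sub>R (y + - z)) \<partial>gaussian_borel)
      = (\<integral>\<^sup>+z. f ((1 / sqrt 2) *\<^sub>R (y + z)) \<partial>gaussian_borel)" for y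
    by (rule nn_integral_gaussian_borel_uminus[of "\<lambda>z. f ((1 / sqrt 2) *\<^sub>R (y + z))"]) measurable
  then show ?thesis
    using nn_integral_gaussian_borel_rotation[OF assms] by simp
qed

lemma gaussian_borel_section_square_le:
  fixes A H :: "'a::euclidean_space set"
  assumes [measurable]: "A \<in> sets borel" "H \<in> sets borel"
    and differences: "\<And>a b. a \<in> A \<Longrightarrow> b \<in> A \<Longrightarrow> a - b \<in> H"
  shows "(\<integral>\<^sup>+y. indicator A ((1 / sqrt 2) *\<^sub>R (x + y)) \<partial>gaussian_borel) ^ 2
    \<le> emeasure gaussian_borel H"
proof -
  let ?\<gamma> = "gaussian_borel :: 'a measure"
  let ?I = "\<lambda>y. indicator A ((1 / sqrt 2) *\<^sub>R (x + y)) :: ennreal"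
  have "(\<integral>\<^sup>+y. ?I y \<partial>?\<gamma>) ^ 2 = (\<integral>\<^sup>+y. ?I y * (\<integral>\<^sup>+z. ?I z \<partial>?\<gamma>) \<partial>?\<gamma>)"
    unfolding power2_eq_square by (rule nn_integral_multc[symmetric]) measurable
  also have "\<dots> = (\<integral>\<^sup>+y. \<integral>\<^sup>+z. ?I y * ?I z \<partial>?\<gamma> \<partial>?\<gamma>)"
    by (intro nn_integral_cong nn_integral_cmult[symmetric]) measurable
  also have "\<dots> \<le> (\<integral>\<^sup>+y. \<integral>\<^sup>+z. indicator H ((1 / sqrt 2) *\<^sub>R (y - z)) \<partial>?\<gamma> \<partial>?\<gamma>)"
  proof (intro nn_integral_mono)
    fix y z
    have "(1 / sqrt 2) *\<^sub>R (x + y) - (1 / sqrt 2) *\<^sub>R (x + z) = (1 / sqrt 2) *\<^sub>R (y - z)"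
      by (simp add: algebra_simps)
    then show "?I y * ?I z \<le> indicator H ((1 / sqrt 2) *\<^sub>R (y - z))"
      using differences[of "(1 / sqrt 2) *\<^sub>R (x + y)" "(1 / sqrt 2) *\<^sub>R (x + z)"]
      by (auto simp: indicator_def)
  qed
  also have "\<dots> = emeasure ?\<gamma> H"
    by (simp add: nn_integral_gaussian_borel_rotation_diff nn_integral_indicator)
  finally show ?thesis .
qed

lemma gaussian_borel_square_le_differences:
  fixes A H :: "'a::euclidean_space set"
  assumes [measurable]: "A \<in> sets borel" "H \<in> sets borel"
    and differences: "\<And>a b. a \<in> A \<Longrightarrow> b \<in> A \<Longrightarrow> a - b \<in> H"
  shows "emeasure gaussian_borel A ^ 2 \<le> emeasure gaussian_borel H"
proof -
  interpret prob_space "gaussian_borel :: 'a measure"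
    by (rule prob_space_gaussian_borel)
  define h where "h x = (\<integral>\<^sup>+y. indicator A ((1 / sqrt 2) *\<^sub>R (x + y)) \<partial>gaussian_borel)" for x :: 'a
  have "emeasure gaussian_borel A = (\<integral>\<^sup>+x. h x \<partial>gaussian_borel)"
    unfolding h_def by (simp add: nn_integral_gaussian_borel_rotation nn_integral_indicator)
  also have "\<dots> ^ 2 \<le> (\<integral>\<^sup>+x. h x ^ 2 \<partial>gaussian_borel)"
    unfolding h_def by (rule nn_integral_square_le) measurable
  also have "\<dots> \<le> (\<integral>\<^sup>+x. emeasure gaussian_borel H \<partial>(gaussian_borel :: 'a measure))"
    using gaussian_borel_section_square_le[OF assms] by (intro nn_integral_mono) (simp add: h_def)
  finally show ?thesis
    by (simp add: emeasure_space_1)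
qed

lemma gaussian_measure_square_le_difference_set:
  fixes A :: "'a::euclidean_space set"
  assumes "A \<in> sets borel" and "{a - b | a b. a \<in> A \<and> b \<in> A} \<in> sets lebesgue"
  shows "emeasure gaussian_measure A ^ 2 \<le> emeasure gaussian_measure {a - b | a b. a \<in> A \<and> b \<in> A}"
proof -
  define D where "D = {a - b | a b. a \<in> A \<and> b \<in> A}"
  have "sets (completion gaussian_borel) = sets (lebesgue :: 'a measure)"
    unfolding gaussian_measure_eq_completion[symmetric] gaussian_measure_def by simp
  with assms(2) have "D \<in> sets (completion gaussian_borel)"
    by (simp add: D_def)
  then obtain H where H: "D \<subseteq> H" "H \<in> sets gaussian_borel"
    and eq: "emeasure (completion gaussian_borel) D = emeasure gaussian_borel H"
    by (rule completion_upper)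
  have "emeasure gaussian_measure A ^ 2 = emeasure gaussian_borel A ^ 2"
    using assms(1) by (simp add: gaussian_measure_eq_completion)
  also have "\<dots> \<le> emeasure gaussian_borel H"
    using H by (intro gaussian_borel_square_le_differences assms(1)) (auto simp: D_def)
  also have "\<dots> = emeasure gaussian_measure D"
    by (simp add: gaussian_measure_eq_completion eq)
  finally show ?thesis
    unfolding D_def .
qed

section \<open>Analytic sets\<close>

text \<open>Analytic sets are parametrised by closed subsets of the countable power of the space itself
  rather than of the Baire space; this makes closed sets trivially analytic.\<close>
definition analytic :: "'a::euclidean_space set \<Rightarrow> bool" where
  "analytic S \<longleftrightarrow> (\<exists>F (g :: (nat \<Rightarrow> 'a) \<Rightarrow> 'a). closed F \<and> continuous_on F g \<and> S = g ` F)"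

lemma analyticI:
  fixes F :: "(nat \<Rightarrow> 'a::euclidean_space) set" and g :: "(nat \<Rightarrow> 'a) \<Rightarrow> 'a"
  shows "closed F \<Longrightarrow> continuous_on F g \<Longrightarrow> S = g ` F \<Longrightarrow> analytic S"
  unfolding analytic_def by (intro exI conjI; assumption)

lemma analyticE:
  fixes S :: "'a::euclidean_space set"
  assumes "analytic S"
  obtains F :: "(nat \<Rightarrow> 'a) set" and g where "closed F" "continuous_on F g" "S = g ` F"
  using assms unfolding analytic_def by (elim exE conjE) (rule that; assumption)

lemma analytic_seqE:
  fixes S :: "nat \<Rightarrow> 'a::euclidean_space set"
  assumes "\<And>n. analytic (S n)"
  obtains F :: "nat \<Rightarrow> (nat \<Rightarrow> 'a) set" and G
  where "\<And>n. closed (F n)" "\<And>n. continuous_on (F n) (G n)" "\<And>n. S n = G n ` F n"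
proof -
  have "\<forall>n. \<exists>F (g :: (nat \<Rightarrow> 'a) \<Rightarrow> 'a). closed F \<and> continuous_on F g \<and> S n = g ` F"
    using assms by (simp add: analytic_def)
  then show ?thesis
    unfolding choice_iff using that by blast
qed

lemma continuous_on_reindex: "continuous_on S (\<lambda>\<sigma>::nat \<Rightarrow> 'b::topological_space. \<sigma> \<circ> r)"
  by (intro continuous_on_coordinatewise_then_product)
     (simp add: continuous_on_product_then_coordinatewise[OF continuous_on_id])

lemma analytic_closed:
  assumes "closed C"
  shows "analytic C"
proof (rule analyticI)
  show "closed ((\<lambda>\<sigma>. \<sigma> 0) -` C)"
    by (intro closed_vimage assms continuous_on_product_coordinates)
  show "continuous_on ((\<lambda>\<sigma>. \<sigma> 0) -` C) (\<lambda>\<sigma>. \<sigma> 0)"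
    by (rule continuous_on_subset[OF continuous_on_product_coordinates]) simp
  show "C = (\<lambda>\<sigma>. \<sigma> 0) ` ((\<lambda>\<sigma>. \<sigma> 0) -` C)"
    by (auto intro: image_eqI[where x = "\<lambda>_. _"])
qed

lemma analytic_set_differences:
  fixes A B :: "'a::euclidean_space set"
  assumes "analytic A" "analytic B"
  shows "analytic {a - b | a b. a \<in> A \<and> b \<in> B}"
proof -
  obtain F :: "(nat \<Rightarrow> 'a) set" and g where F: "closed F" "continuous_on F g" "A = g ` F"
    using assms(1) by (rule analyticE)
  obtain F' :: "(nat \<Rightarrow> 'a) set" and g' where F': "closed F'" "continuous_on F' g'" "B = g' ` F'"
    using assms(2) by (rule analyticE)
  let ?fst = "\<lambda>\<sigma>::nat \<Rightarrow> 'a. \<sigma> \<circ> curry prod_encode 0"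
    and ?snd = "\<lambda>\<sigma>::nat \<Rightarrow> 'a. \<sigma> \<circ> curry prod_encode 1"
  define D where "D = ?fst -` F \<inter> ?snd -` F'"
  show ?thesis
  proof (rule analyticI)
    show "closed D"
      unfolding D_def
      by (intro closed_Int closed_vimage F(1) F'(1) continuous_on_reindex)
    show "continuous_on D (\<lambda>\<sigma>. g (?fst \<sigma>) - g' (?snd \<sigma>))"
      by (intro continuous_on_diff continuous_on_compose2[OF F(2) continuous_on_reindex]
          continuous_on_compose2[OF F'(2) continuous_on_reindex]) (auto simp: D_def)
    show "{a - b | a b. a \<in> A \<and> b \<in> B} = (\<lambda>\<sigma>. g (?fst \<sigma>) - g' (?snd \<sigma>)) ` D"
      unfolding F(3) F'(3)
    proof safe
      fix x y assume "x \<in> F" "y \<in> F'"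
      moreover have "?fst (case_prod (\<lambda>n. if n = 0 then x else y) \<circ> prod_decode) = x"
        "?snd (case_prod (\<lambda>n. if n = 0 then x else y) \<circ> prod_decode) = y"
        by (auto simp: fun_eq_iff)
      ultimately show "g x - g' y \<in> (\<lambda>\<sigma>. g (?fst \<sigma>) - g' (?snd \<sigma>)) ` D"
        unfolding D_def
        by (intro image_eqI[where x = "case_prod (\<lambda>n. if n = 0 then x else y) \<circ> prod_decode"]) auto
    qed (auto simp: D_def)
  qed
qed

lemma analytic_INT:
  fixes S :: "nat \<Rightarrow> 'a::euclidean_space set"
  assumes "\<And>n. analytic (S n)"
  shows "analytic (\<Inter>n. S n)"
proof -
  obtain F :: "nat \<Rightarrow> (nat \<Rightarrow> 'a) set" and G where
    F: "\<And>n. closed (F n)" "\<And>n. continuous_on (F n) (G n)" "\<And>n. S n = G n ` F n"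
    by (rule analytic_seqE[of S, OF assms]) (rule that)
  let ?part = "\<lambda>n (\<sigma>::nat \<Rightarrow> 'a). \<sigma> \<circ> curry prod_encode n"
  define P where "P n = ?part n -` F n \<inter> ?part 0 -` F 0" for n
  define D where "D = (\<Inter>n. P n \<inter> (\<lambda>\<sigma>. G n (?part n \<sigma>) - G 0 (?part 0 \<sigma>)) -` {0})"
  have P: "closed (P n)" for n
    unfolding P_def by (intro closed_Int closed_vimage F(1) continuous_on_reindex)
  have cont: "continuous_on (P n) (\<lambda>\<sigma>. G n (?part n \<sigma>) - G 0 (?part 0 \<sigma>))" for n
    by (intro continuous_on_diff continuous_on_compose2[OF F(2) continuous_on_reindex])
      (auto simp: P_def)
  have "closed D"
    unfolding D_def by (intro closed_INT ballI continuous_closed_preimage cont P closed_singleton)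
  moreover have "continuous_on D (\<lambda>\<sigma>. G 0 (?part 0 \<sigma>))"
    by (intro continuous_on_compose2[OF F(2) continuous_on_reindex]) (auto simp: D_def P_def)
  moreover have "(\<Inter>n. S n) = (\<lambda>\<sigma>. G 0 (?part 0 \<sigma>)) ` D"
  proof safe
    fix y assume "y \<in> (\<Inter>n. S n)"
    then have "\<forall>n. \<exists>\<tau>. \<tau> \<in> F n \<and> G n \<tau> = y"
      by (auto simp: F(3))
    then obtain \<tau> where \<tau>: "\<And>n. \<tau> n \<in> F n" "\<And>n. G n (\<tau> n) = y"
      by metis
    have "?part n (case_prod \<tau> \<circ> prod_decode) = \<tau> n" for n
      by (simp add: fun_eq_iff)
    then show "y \<in> (\<lambda>\<sigma>. G 0 (?part 0 \<sigma>)) ` D"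
      using \<tau> by (intro image_eqI[where x = "case_prod \<tau> \<circ> prod_decode"]) (auto simp: D_def P_def)
  next
    fix \<sigma> n assume "\<sigma> \<in> D"
    then show "G 0 (?part 0 \<sigma>) \<in> S n"
      unfolding D_def P_def F(3) by (force intro: image_eqI)
  qed
  ultimately show ?thesis
    by (rule analyticI)
qed

lemma LIMSEQ_scaleR_nat_eventually_const:
  fixes e :: "'a::real_normed_vector"
  assumes "norm e = 1" and "(\<lambda>j. real (n j) *\<^sub>R e) \<longlonglongrightarrow> x"
  shows "\<exists>N. eventually (\<lambda>j. n j = N) sequentially \<and> x = real N *\<^sub>R e"
proof -
  obtain M where M: "\<And>i j. i \<ge> M \<Longrightarrow> j \<ge> M \<Longrightarrow> dist (real (n i) *\<^sub>R e) (real (n j) *\<^sub>R e) < 1"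
    using metric_CauchyD[OF LIMSEQ_imp_Cauchy[OF assms(2)] zero_less_one] by blast
  have "n j = n M" if "j \<ge> M" for j
  proof -
    have "\<bar>real (n j) - real (n M)\<bar> = dist (real (n j) *\<^sub>R e) (real (n M) *\<^sub>R e)"
      using assms(1) by (simp add: dist_norm flip: scaleR_diff_left)
    also have "\<dots> < 1"
      using M[OF that order_refl] .
    finally show ?thesis by linarith
  qed
  then have ev: "eventually (\<lambda>j. n j = n M) sequentially"
    by (rule eventually_sequentiallyI)
  then have "(\<lambda>j. real (n j) *\<^sub>R e) \<longlonglongrightarrow> real (n M) *\<^sub>R e"
    by (rule tendsto_eventually[OF eventually_mono]) simp
  then have "x = real (n M) *\<^sub>R e"
    by (rule LIMSEQ_unique[OF assms(2)])
  with ev show ?thesis by blast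
qed

lemma LIMSEQ_tagged_sequences:
  fixes x :: "nat \<Rightarrow> nat \<Rightarrow> 'a::real_normed_vector"
  assumes "norm e = 1" and tag: "\<And>j. x j 0 = real (n j) *\<^sub>R e"
    and tail: "\<And>j. x j \<circ> Suc \<in> F (n j)" and closed: "\<And>k. closed (F k)" and lim: "x \<longlonglongrightarrow> l"
  shows "\<exists>N. eventually (\<lambda>j. n j = N) sequentially \<and> l 0 = real N *\<^sub>R e \<and> l \<circ> Suc \<in> F N"
proof -
  have "(\<lambda>j. x j 0) \<longlonglongrightarrow> l 0"
    using continuous_on_tendsto_compose[OF continuous_on_product_coordinates lim] by simp
  then have "(\<lambda>j. real (n j) *\<^sub>R e) \<longlonglongrightarrow> l 0"
    by (simp add: tag)
  then obtain N where N: "eventually (\<lambda>j. n j = N) sequentially" "l 0 = real N *\<^sub>R e"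
    using LIMSEQ_scaleR_nat_eventually_const[OF assms(1)] by blast
  have "(\<lambda>j. x j \<circ> Suc) \<longlonglongrightarrow> (l \<circ> Suc)"
    using continuous_on_tendsto_compose[OF continuous_on_reindex[of UNIV Suc] lim] by simp
  moreover have "eventually (\<lambda>j. x j \<circ> Suc \<in> F N) sequentially"
    using N(1) by eventually_elim (use tail in auto)
  ultimately have "l \<circ> Suc \<in> F N"
    by (rule Lim_in_closed_set[OF closed, rotated -1]) simp
  with N show ?thesis
    by blast
qed

text \<open>The first coordinate \<open>n *\<^sub>R e\<close> of a parameter in \<open>D\<close> records which \<open>F n\<close> its tail lies in.\<close>
lemma tagged_union_closed_continuous:
  fixes F :: "nat \<Rightarrow> (nat \<Rightarrow> 'a::euclidean_space) set" and G :: "nat \<Rightarrow> (nat \<Rightarrow> 'a) \<Rightarrow> 'b::metric_space"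
  assumes e: "e \<in> Basis" and F: "\<And>n. closed (F n)" "\<And>n. continuous_on (F n) (G n)"
  defines "D \<equiv> {\<sigma>. \<exists>n. \<sigma> 0 = real n *\<^sub>R e \<and> \<sigma> \<circ> Suc \<in> F n}"
    and "g \<equiv> \<lambda>\<sigma>. G (THE n. \<sigma> 0 = real n *\<^sub>R e) (\<sigma> \<circ> Suc)"
  shows "closed D" and "continuous_on D g"
proof -
  define index where "index \<sigma> = (THE n. \<sigma> 0 = real n *\<^sub>R e)" for \<sigma> :: "nat \<Rightarrow> 'a"
  have index: "index \<sigma> = n" if "\<sigma> 0 = real n *\<^sub>R e" for \<sigma> n
    using that e by (simp add: index_def nonzero_Basis)
  have D: "\<sigma> \<in> D \<longleftrightarrow> \<sigma> 0 = real (index \<sigma>) *\<^sub>R e \<and> \<sigma> \<circ> Suc \<in> F (index \<sigma>)" for \<sigma>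
    using index by (auto simp: D_def)
  have g: "g \<sigma> = G (index \<sigma>) (\<sigma> \<circ> Suc)" for \<sigma>
    by (simp add: g_def index_def)
  have limit: "\<exists>N. eventually (\<lambda>j. index (x j) = N) sequentially \<and> index l = N \<and> l \<in> D"
    if x: "\<And>j. x j \<in> D" and lim: "x \<longlonglongrightarrow> l" for x l
  proof -
    have "norm e = 1"
      using e by simp
    moreover have tag: "x j 0 = real (index (x j)) *\<^sub>R e"
      and tail: "x j \<circ> Suc \<in> F (index (x j))" for j
      using x[of j] by (simp_all add: D)
    ultimately obtain N where N: "eventually (\<lambda>j. index (x j) = N) sequentially"
      "l 0 = real N *\<^sub>R e" "l \<circ> Suc \<in> F N"
      using LIMSEQ_tagged_sequences[of e x "\<lambda>j. index (x j)" F l, OF _ tag tail F(1) lim] by blast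
    moreover have "index l = N"
      using N(2) by (rule index)
    ultimately show ?thesis
      by (auto simp: D)
  qed
  show "closed D"
    unfolding closed_sequential_limits using limit by blast
  show "continuous_on D g"
    unfolding continuous_on_sequentially
  proof (intro allI ballI impI, elim conjE)
    fix x l assume x: "\<forall>j. x j \<in> D" and lim: "x \<longlonglongrightarrow> l"
    with limit[of x l] obtain N where N: "eventually (\<lambda>j. index (x j) = N) sequentially"
      "index l = N" "l \<in> D"
      by blast
    have tail: "eventually (\<lambda>j. x j \<circ> Suc \<in> F N) sequentially"
      using N(1) by eventually_elim (use x in \<open>auto simp: D\<close>)
    have "(\<lambda>j. x j \<circ> Suc) \<longlonglongrightarrow> (l \<circ> Suc)"
      using continuous_on_tendsto_compose[OF continuous_on_reindex[of UNIV Suc] lim] by simp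
    then have "(\<lambda>j. G N (x j \<circ> Suc)) \<longlonglongrightarrow> G N (l \<circ> Suc)"
      by (rule continuous_on_tendsto_compose[OF F(2)]) (use N(2,3) tail in \<open>auto simp: D\<close>)
    moreover have "eventually (\<lambda>j. G N (x j \<circ> Suc) = (g \<circ> x) j) sequentially"
      using N(1) by eventually_elim (simp add: g)
    ultimately have "(g \<circ> x) \<longlonglongrightarrow> G N (l \<circ> Suc)"
      by (rule Lim_transform_eventually)
    then show "(g \<circ> x) \<longlonglongrightarrow> g l"
      using N(2) by (simp add: g)
  qed
qed

lemma analytic_UN:
  fixes S :: "nat \<Rightarrow> 'a::euclidean_space set"
  assumes "\<And>n. analytic (S n)"
  shows "analytic (\<Union>n. S n)"
proof -
  obtain F :: "nat \<Rightarrow> (nat \<Rightarrow> 'a) set" and G where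
    F: "\<And>n. closed (F n)" "\<And>n. continuous_on (F n) (G n)" "\<And>n. S n = G n ` F n"
    by (rule analytic_seqE[of S, OF assms]) (rule that)
  obtain e :: 'a where e: "e \<in> Basis"
    using nonempty_Basis by blast
  define D where "D = {\<sigma>. \<exists>n. \<sigma> 0 = real n *\<^sub>R e \<and> \<sigma> \<circ> Suc \<in> F n}"
  define g where "g \<sigma> = G (THE n. \<sigma> 0 = real n *\<^sub>R e) (\<sigma> \<circ> Suc)" for \<sigma>
  show ?thesis
  proof (rule analyticI)
    show "closed D"
      unfolding D_def by (rule tagged_union_closed_continuous(1)[of e F G, OF e F(1,2)])
    show "continuous_on D g"
      unfolding D_def g_def[abs_def]
      by (rule tagged_union_closed_continuous(2)[of e F G, OF e F(1,2)])
    show "(\<Union>n. S n) = g ` D"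
    proof safe
      fix y n assume "y \<in> S n"
      then obtain \<tau> where "\<tau> \<in> F n" "y = G n \<tau>"
        using F(3) by auto
      then show "y \<in> g ` D"
        by (intro image_eqI[where x = "case_nat (real n *\<^sub>R e) \<tau>"])
           (use e in \<open>auto simp: D_def g_def comp_def nonzero_Basis\<close>)
    next
      fix \<sigma> assume "\<sigma> \<in> D"
      then obtain n where "\<sigma> 0 = real n *\<^sub>R e" "\<sigma> \<circ> Suc \<in> F n"
        by (auto simp: D_def)
      then have "g \<sigma> \<in> S n"
        using e by (simp add: g_def F(3) nonzero_Basis)
      then show "g \<sigma> \<in> (\<Union>n. S n)"
        by blast
    qed
  qed
qed

lemma analytic_open:
  fixes U :: "'a::euclidean_space set"
  assumes "open U"
  shows "analytic U"
proof -
  have "fsigma_in euclidean U"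
    using assms by (intro open_imp_fsigma_in) (simp_all add: metrizable_space_euclidean)
  then show ?thesis
    unfolding fsigma_in_ascending closed_closedin[symmetric]
    by (auto intro!: analytic_UN intro: analytic_closed)
qed

lemma analytic_sets_borel:
  fixes B :: "'a::euclidean_space set"
  assumes "B \<in> sets borel"
  shows "analytic B"
proof -
  have "analytic B \<and> analytic (- B)"
    using assms unfolding sets_borel
  proof (induction rule: sigma_sets.induct)
    case (Basic a)
    then show ?case
      by (simp add: analytic_open analytic_closed closed_Compl)
  next
    case Empty
    show ?case
      by (simp add: analytic_closed)
  next
    case (Compl a)
    then show ?case
      by (simp add: Compl_eq_Diff_UNIV[symmetric])
  next
    case (Union a)
    then show ?case
      by (simp add: analytic_UN analytic_INT)
  qed
  then show ?thesis ..
qed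

section \<open>Lebesgue measurability of analytic sets\<close>

lemma tendsto_fun_iff:
  fixes f :: "'x \<Rightarrow> 'i \<Rightarrow> 'b::topological_space"
  shows "(f \<longlongrightarrow> l) F \<longleftrightarrow> (\<forall>i. ((\<lambda>x. f x i) \<longlongrightarrow> l i) F)"
  using limitin_componentwise[of "\<lambda>_. euclidean" UNIV f l F]
  by (simp add: euclidean_product_topology)

definition prefix_box :: "(nat \<Rightarrow> nat) \<Rightarrow> nat \<Rightarrow> (nat \<Rightarrow> 'a::real_normed_vector) set" where
  "prefix_box r n = {\<sigma>. \<forall>i<n. norm (\<sigma> i) \<le> real (r i)}"

lemma prefix_box_0[simp]: "prefix_box r 0 = UNIV"
  unfolding prefix_box_def by simp

lemma prefix_box_Suc: "prefix_box (r(n := j)) (Suc n) = prefix_box r n \<inter> {\<sigma>. norm (\<sigma> n) \<le> real j}"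
  unfolding prefix_box_def by (auto simp: less_Suc_eq)

lemma prefix_box_antimono: "m \<le> n \<Longrightarrow> prefix_box r n \<subseteq> prefix_box r m"
  unfolding prefix_box_def by auto

lemma prefix_box_cong: "(\<And>i. i < n \<Longrightarrow> r i = r' i) \<Longrightarrow> prefix_box r n = prefix_box r' n"
  unfolding prefix_box_def by auto

lemma prefix_box_subseq_convergent:
  fixes s :: "nat \<Rightarrow> nat \<Rightarrow> 'a::euclidean_space"
  assumes s: "\<And>n. s n \<in> prefix_box r n"
  obtains l q where "strict_mono q" "(s \<circ> q) \<longlonglongrightarrow> l"
proof -
  define P :: "(nat \<Rightarrow> 'a) set" where "P = PiE UNIV (\<lambda>i. cball 0 (real (r i)))"
  have "compact P"
    using compactin_PiE[of "\<lambda>_. euclidean" UNIV "\<lambda>i. cball (0::'a) (real (r i))"]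
    by (simp add: P_def euclidean_product_topology compact_cball)
  define \<tau> where "\<tau> n i = (if i < n then s n i else 0)" for n i
  have "\<tau> n \<in> P" for n
    using s[of n] by (auto simp: P_def \<tau>_def prefix_box_def)
  then obtain l q where "strict_mono q" and lim_\<tau>: "(\<tau> \<circ> q) \<longlonglongrightarrow> l"
    using compact_imp_seq_compact[OF \<open>compact P\<close>] by (meson seq_compactE)
  have "(s \<circ> q) \<longlonglongrightarrow> l"
    unfolding tendsto_fun_iff
  proof
    fix i
    have "eventually (\<lambda>j. \<tau> (q j) i = s (q j) i) sequentially"
      using seq_suble[OF \<open>strict_mono q\<close>]
      by (intro eventually_sequentiallyI[of "Suc i"]) (simp add: \<tau>_def less_eq_Suc_le order_trans)
    with lim_\<tau> show "((\<lambda>j. (s \<circ> q) j i) \<longlonglongrightarrow> l i)"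
      unfolding tendsto_fun_iff by (auto elim: Lim_transform_eventually)
  qed
  with \<open>strict_mono q\<close> show ?thesis
    by (rule that)
qed

lemma mem_image_if_mem_closure_prefix_boxes:
  fixes F :: "(nat \<Rightarrow> 'a::euclidean_space) set" and G :: "(nat \<Rightarrow> 'a) \<Rightarrow> 'b::metric_space"
  assumes F: "closed F" and G: "continuous_on F G"
    and y: "\<And>n. y \<in> closure (G ` (F \<inter> prefix_box r n))"
  shows "y \<in> G ` F"
proof -
  have "\<forall>n. \<exists>\<sigma>. \<sigma> \<in> F \<inter> prefix_box r n \<and> dist (G \<sigma>) y < inverse (real (Suc n))"
  proof
    fix n
    have "inverse (real (Suc n)) > 0"
      by simp
    with y[of n] show "\<exists>\<sigma>. \<sigma> \<in> F \<inter> prefix_box r n \<and> dist (G \<sigma>) y < inverse (real (Suc n))"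
      unfolding closure_approachable by blast
  qed
  then obtain s where s: "\<And>n. s n \<in> F \<inter> prefix_box r n"
    and close: "\<And>n. dist (G (s n)) y < inverse (real (Suc n))"
    by metis
  have "s n \<in> prefix_box r n" for n
    using s by blast
  then obtain l q where q: "strict_mono q" and lim_s: "(s \<circ> q) \<longlonglongrightarrow> l"
    by (rule prefix_box_subseq_convergent)
  have "l \<in> F"
    using s by (intro Lim_in_closed_set[OF F _ _ lim_s]) auto
  then have "(\<lambda>j. G ((s \<circ> q) j)) \<longlonglongrightarrow> G l"
    using s by (intro continuous_on_tendsto_compose[OF G lim_s]) auto
  moreover have "(\<lambda>j. G ((s \<circ> q) j)) \<longlonglongrightarrow> y"
  proof -
    have "norm (dist (G (s n)) y) \<le> inverse (real (Suc n))" for n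
      using close[of n] by simp
    then have "(\<lambda>n. dist (G (s n)) y) \<longlonglongrightarrow> 0"
      by (intro Lim_null_comparison[OF always_eventually LIMSEQ_inverse_real_of_nat] allI)
    then have "(\<lambda>n. G (s n)) \<longlonglongrightarrow> y"
      by (rule tendsto_dist_iff[THEN iffD2])
    from LIMSEQ_subseq_LIMSEQ[OF this q] show ?thesis
      by (simp add: comp_def)
  qed
  ultimately have "y = G l"
    using LIMSEQ_unique by blast
  with \<open>l \<in> F\<close> show ?thesis
    by blast
qed

lemma outer_measure_of_gt_prefix_box_Suc:
  fixes G :: "(nat \<Rightarrow> 'a::real_normed_vector) \<Rightarrow> 'b::euclidean_space"
  assumes "c < outer_measure_of lebesgue (G ` (F \<inter> prefix_box r n))"
  shows "\<exists>j. c < outer_measure_of lebesgue (G ` (F \<inter> prefix_box (r(n := j)) (Suc n)))"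
proof -
  let ?A = "\<lambda>j. G ` (F \<inter> prefix_box (r(n := j)) (Suc n))"
  have "incseq ?A"
    by (auto simp: incseq_def prefix_box_Suc)
  moreover have "(\<Union>j. ?A j) = G ` (F \<inter> prefix_box r n)"
  proof
    show "G ` (F \<inter> prefix_box r n) \<subseteq> (\<Union>j. ?A j)"
    proof
      fix z assume "z \<in> G ` (F \<inter> prefix_box r n)"
      then obtain \<sigma> where "\<sigma> \<in> F \<inter> prefix_box r n" "z = G \<sigma>"
        by blast
      moreover obtain j :: nat where "norm (\<sigma> n) \<le> real j"
        using real_arch_simple by blast
      ultimately show "z \<in> (\<Union>j. ?A j)"
        by (auto simp: prefix_box_Suc)
    qed
  qed (auto simp: prefix_box_Suc)
  ultimately have "(SUP j. outer_measure_of lebesgue (?A j))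
      = outer_measure_of lebesgue (G ` (F \<inter> prefix_box r n))"
    by (simp add: SUP_outer_measure_of_incseq)
  with assms have "c < (SUP j. outer_measure_of lebesgue (?A j))"
    by simp
  then show ?thesis
    by (simp add: less_SUP_iff)
qed

text \<open>Bounds on the coordinates are chosen one at a time, each keeping the outer measure above
  \<open>c\<close>; this works because outer measure is continuous along increasing sequences.\<close>
lemma ex_prefix_box_bounds_outer_measure_gt:
  fixes G :: "(nat \<Rightarrow> 'a::real_normed_vector) \<Rightarrow> 'b::euclidean_space"
  assumes c: "c < outer_measure_of lebesgue (G ` F)"
  shows "\<exists>r. \<forall>n. c < outer_measure_of lebesgue (G ` (F \<inter> prefix_box r n))"
proof -
  define P where "P n r \<longleftrightarrow> c < outer_measure_of lebesgue (G ` (F \<inter> prefix_box r n))" for n r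
  have "\<exists>R. \<forall>n. P n (R n) \<and> R (Suc n) = (R n)(n := R (Suc n) n)"
  proof (rule dependent_nat_choice)
    show "\<exists>r. P 0 r"
      using c by (simp add: P_def)
  next
    fix r n assume "P n r"
    then obtain j where "P (Suc n) (r(n := j))"
      unfolding P_def by (metis outer_measure_of_gt_prefix_box_Suc)
    then show "\<exists>r'. P (Suc n) r' \<and> r' = r(n := r' n)"
      by (intro exI[of _ "r(n := j)"]) simp
  qed
  then obtain R where R: "\<And>n. P n (R n)" "\<And>n. R (Suc n) = (R n)(n := R (Suc n) n)"
    by blast
  define r where "r i = R (Suc i) i" for i
  have R_eq_r: "R n i = r i" if "i < n" for n i
    using that
  proof (induction n)
    case (Suc n)
    show ?case
    proof (cases "i = n")
      case False
      then have "R (Suc n) i = R n i"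
        using R(2)[of n] by (metis fun_upd_other)
      with False Suc show ?thesis
        by simp
    qed (simp add: r_def)
  qed simp
  have "c < outer_measure_of lebesgue (G ` (F \<inter> prefix_box r n))" for n
    using R(1)[of n] by (simp add: P_def prefix_box_cong[OF R_eq_r])
  then show ?thesis
    by blast
qed

lemma closed_subset_continuous_image_emeasure_ge:
  fixes F :: "(nat \<Rightarrow> 'a::euclidean_space) set" and G :: "(nat \<Rightarrow> 'a) \<Rightarrow> 'b::euclidean_space"
  assumes F: "closed F" and G: "continuous_on F G" and bounded: "bounded (G ` F)"
    and c: "c < outer_measure_of lebesgue (G ` F)"
  obtains K where "closed K" "K \<subseteq> G ` F" "c \<le> emeasure lebesgue K"
proof -
  obtain r where r: "\<And>n. c < outer_measure_of lebesgue (G ` (F \<inter> prefix_box r n))"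
    using ex_prefix_box_bounds_outer_measure_gt[OF c] by blast
  define D where "D n = closure (G ` (F \<inter> prefix_box r n))" for n
  have D_sets: "D n \<in> sets lebesgue" for n
    by (simp add: D_def borel_closed)
  have c_le_D: "c \<le> emeasure lebesgue (D n)" for n
  proof -
    have "c < outer_measure_of lebesgue (G ` (F \<inter> prefix_box r n))"
      by (rule r)
    also have "\<dots> \<le> outer_measure_of lebesgue (D n)"
      unfolding D_def by (rule outer_measure_of_mono[OF closure_subset])
    finally show ?thesis
      using D_sets by simp
  qed
  define K where "K = (\<Inter>n. D n)"
  have "closed K"
    by (simp add: K_def D_def closed_INT)
  moreover have "K \<subseteq> G ` F"
  proof
    fix y assume "y \<in> K"
    then show "y \<in> G ` F"
      by (intro mem_image_if_mem_closure_prefix_boxes[OF F G, of y r]) (auto simp: K_def D_def)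
  qed
  moreover have "emeasure lebesgue K = (INF n. emeasure lebesgue (D n))"
    unfolding K_def
  proof (rule INF_emeasure_decseq'[symmetric])
    show "decseq D"
      unfolding decseq_def D_def
      by (intro allI impI closure_mono image_mono Int_mono order_refl prefix_box_antimono)
    have "emeasure lborel (D 0) < \<infinity>"
      using bounded by (intro emeasure_bounded_finite) (simp add: D_def bounded_closure)
    then show "\<exists>i. emeasure lebesgue (D i) \<noteq> \<infinity>"
      by (intro exI[of _ 0]) (simp add: D_def borel_closed)
  qed (rule D_sets)
  then have "c \<le> emeasure lebesgue K"
    using c_le_D by (simp add: le_INF_iff)
  ultimately show ?thesis
    by (rule that)
qed

lemma lmeasurable_hull:
  fixes S :: "'a::euclidean_space set"
  assumes "bounded S"
  obtains U where "U \<in> lmeasurable" "S \<subseteq> U" "emeasure lebesgue U = outer_measure_of lebesgue S"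
proof -
  obtain U where U: "U \<in> sets lebesgue" "S \<subseteq> U" "emeasure lebesgue U = outer_measure_of lebesgue S"
    using outer_measure_of_attain[of S lebesgue] by auto
  obtain x \<rho> where "S \<subseteq> cball x \<rho>"
    using assms unfolding bounded_subset_cball by metis
  then have "outer_measure_of lebesgue S \<le> outer_measure_of lebesgue (cball x \<rho>)"
    by (rule outer_measure_of_mono)
  also have "\<dots> < \<infinity>"
    using lmeasurable_cball[of x \<rho>] by (simp add: fmeasurable_def)
  finally have "U \<in> lmeasurable"
    using U by (intro fmeasurableI) auto
  with U show ?thesis
    by (intro that) auto
qed

lemma sets_lebesgue_bounded_continuous_image:
  fixes F :: "(nat \<Rightarrow> 'a::euclidean_space) set" and G :: "(nat \<Rightarrow> 'a) \<Rightarrow> 'b::euclidean_space"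
  assumes F: "closed F" and G: "continuous_on F G" and bounded: "bounded (G ` F)"
  shows "G ` F \<in> sets lebesgue"
proof -
  obtain U where U_lmeasurable: "U \<in> lmeasurable" and U: "G ` F \<subseteq> U"
    "emeasure lebesgue U = outer_measure_of lebesgue (G ` F)"
    using bounded by (rule lmeasurable_hull)
  have "G ` F \<in> lmeasurable"
  proof (subst completion.fmeasurable_inner_outer, intro allI impI)
    fix e :: real assume "e > 0"
    show "\<exists>T\<in>lmeasurable. \<exists>V\<in>lmeasurable. T \<subseteq> G ` F \<and> G ` F \<subseteq> V
        \<and> \<bar>measure lebesgue T - measure lebesgue V\<bar> < e"
    proof (cases "measure lebesgue U < e")
      case True
      then show ?thesis
        using U(1) U_lmeasurable by (intro bexI[of _ "{}"] bexI[of _ U]) auto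
    next
      case False
      have "ennreal (measure lebesgue U - e / 2) < ennreal (measure lebesgue U)"
        using False \<open>e > 0\<close> by (intro ennreal_lessI) auto
      also have "\<dots> = outer_measure_of lebesgue (G ` F)"
        using U(2) U_lmeasurable by (simp add: emeasure_eq_measure2)
      finally obtain K where K: "closed K" "K \<subseteq> G ` F"
        "ennreal (measure lebesgue U - e / 2) \<le> emeasure lebesgue K"
        by (rule closed_subset_continuous_image_emeasure_ge[OF F G bounded])
      have K_lmeasurable: "K \<in> lmeasurable"
        using K(1,2) bounded
        by (intro bounded_set_imp_lmeasurable) (auto intro: bounded_subset simp: borel_closed)
      have "measure lebesgue U - e / 2 \<le> measure lebesgue K"
        using K(3) K_lmeasurable by (simp add: emeasure_eq_measure2)
      moreover have "measure lebesgue K \<le> measure lebesgue U"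
        using K(2) U(1) K_lmeasurable U_lmeasurable by (intro measure_mono_fmeasurable) auto
      ultimately show ?thesis
        using K(2) U(1) K_lmeasurable U_lmeasurable \<open>e > 0\<close>
        by (intro bexI[of _ K] bexI[of _ U]) auto
    qed
  qed
  then show ?thesis
    by (rule fmeasurableD)
qed

lemma analytic_sets_lebesgue:
  fixes S :: "'a::euclidean_space set"
  assumes "analytic S"
  shows "S \<in> sets lebesgue"
proof -
  obtain F :: "(nat \<Rightarrow> 'a) set" and G where F: "closed F" "continuous_on F G" "S = G ` F"
    using assms by (rule analyticE)
  define F' where "F' n = F \<inter> G -` cball 0 (real n)" for n
  have "G ` F' n \<in> sets lebesgue" for n
  proof (rule sets_lebesgue_bounded_continuous_image)
    show "closed (F' n)"
      unfolding F'_def by (rule continuous_closed_preimage[OF F(2,1) closed_cball])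
    show "continuous_on (F' n) G"
      by (rule continuous_on_subset[OF F(2)]) (auto simp: F'_def)
    show "bounded (G ` F' n)"
      by (rule bounded_subset[OF bounded_cball]) (auto simp: F'_def)
  qed
  moreover have "S = (\<Union>n. G ` F' n)"
  proof
    show "S \<subseteq> (\<Union>n. G ` F' n)"
    proof
      fix y assume "y \<in> S"
      then obtain \<sigma> where "\<sigma> \<in> F" "y = G \<sigma>"
        using F(3) by blast
      moreover obtain n :: nat where "norm (G \<sigma>) \<le> real n"
        using real_arch_simple by blast
      ultimately have "\<sigma> \<in> F' n" "y = G \<sigma>"
        by (auto simp: F'_def)
      then show "y \<in> (\<Union>n. G ` F' n)"
        by blast
    qed
  qed (auto simp: F'_def F(3))
  ultimately show ?thesis
    by simp
qed

theorem lemma4p5: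
  fixes A :: "'a::euclidean_space set"
  assumes "A \<in> sets (borel :: 'a measure)"
  shows "measure gaussian_measure {a - b | a b. a \<in> A \<and> b \<in> A}
           \<ge> (measure gaussian_measure A) ^ 4"
proof -
  interpret prob_space gaussian_measure
    by (rule prob_space_gaussian_measure)
  let ?D = "{a - b | a b. a \<in> A \<and> b \<in> A}"
  have "?D \<in> sets lebesgue"
    using assms by (intro analytic_sets_lebesgue analytic_set_differences analytic_sets_borel)
  with assms have "emeasure gaussian_measure A ^ 2 \<le> emeasure gaussian_measure ?D"
    by (rule gaussian_measure_square_le_difference_set)
  then have "measure gaussian_measure A ^ 2 \<le> measure gaussian_measure ?D"
    by (simp add: emeasure_eq_measure ennreal_power)
  moreover have "measure gaussian_measure A ^ 4 \<le> measure gaussian_measure A ^ 2"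
    by (intro power_decreasing) auto
  ultimately show ?thesis
    by simp
qed

end
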